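(* For all integers $n$ and $d$ with $3\leq d<\left\lceil\frac{n}{2}\right\rceil$, $$t(n,d)\geq n-d-3+\left\lceil\frac{n-1}{d}\right\rceil.$$
   Context: All graphs are finite, simple and undirected. In an edge-colored graph (adjacent edges may receive the same color), a path is a rainbow path if no two of its edges have the same color. A graph $G$ is $d$-rainbow connected if there is an edge-coloring of $G$ using $d$ colors such that every two distinct vertices of $G$ are joined by a rainbow path. For positive integers $n$ and $d$, $t(n,d)$ denotes the minimum number of edges of a $d$-rainbow connected graph on $n$ vertices. *)

theory Defs
  imports Complex_Main
begin

definition simple_graph :: "'a set \<Rightarrow> 'a set set \<Rightarrow> bool" where
  "simple_graph V E \<longleftrightarrow> finite V \<and> (\<forall>e\<in>E. e \<subseteq> V \<and> card e = 2)"

definition path_edges :: "'a list \<Rightarrow> 'a set list" where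
  "path_edges p = map (\<lambda>(x, y). {x, y}) (zip p (tl p))"

definition is_path :: "'a set set \<Rightarrow> 'a list \<Rightarrow> 'a \<Rightarrow> 'a \<Rightarrow> bool" where
  "is_path E p u v \<longleftrightarrow> p \<noteq> [] \<and> hd p = u \<and> last p = v \<and> distinct p
      \<and> set (path_edges p) \<subseteq> E"

definition rainbow_path :: "'a set set \<Rightarrow> ('a set \<Rightarrow> 'c) \<Rightarrow> 'a list \<Rightarrow> 'a \<Rightarrow> 'a \<Rightarrow> bool" where
  "rainbow_path E c p u v \<longleftrightarrow> is_path E p u v \<and> distinct (map c (path_edges p))"

definition rainbow_connected :: "nat \<Rightarrow> 'a set \<Rightarrow> 'a set set \<Rightarrow> bool" where
  "rainbow_connected d V E \<longleftrightarrow>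
     (\<exists>c :: 'a set \<Rightarrow> nat. (\<forall>e\<in>E. c e < d) \<and>
        (\<forall>u\<in>V. \<forall>v\<in>V. u \<noteq> v \<longrightarrow> (\<exists>p. rainbow_path E c p u v)))"

(* t(n,d): minimum number of edges of a d-rainbow connected graph on n vertices
   (vertex set {0..<n}, which is w.l.o.g. up to isomorphism) *)
definition t :: "nat \<Rightarrow> nat \<Rightarrow> nat" where
  "t n d = (LEAST m. \<exists>E. simple_graph {0..<n} E \<and> rainbow_connected d {0..<n::nat} E \<and> card E = m)"

end

theory Submission imports Defs begin

text \<open>Fix a colour j and let F be the edges not coloured j. The graph (V, F) has at least
  |V| - |F| components; pick one vertex in each. A rainbow path between two of these
  representatives uses exactly one j-coloured edge, and that edge determines the pair of
  components it joins, so there are at least p choose 2 edges of colour j, where p is the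
  number of components. Since p \<ge> |V| - |F|, this bounds |E| from below by a quadratic
  in p; linearising it in p and summing over the d colours gives
  2 (|V| - 1) \<le> 2d (|E| - |V| + 1) + d^2 + d, which is stronger than the claim.\<close>

definition edge_rel :: "'a set set \<Rightarrow> ('a \<times> 'a) set" where
  "edge_rel F = {(x, y). {x, y} \<in> F}"

lemma sym_edge_rel: "sym (edge_rel F)"
  unfolding sym_def edge_rel_def by (auto simp: insert_commute)

lemma edge_rel_rtrancl_sym: "(a, b) \<in> (edge_rel F)\<^sup>* \<Longrightarrow> (b, a) \<in> (edge_rel F)\<^sup>*"
  by (rule symD[OF sym_rtrancl[OF sym_edge_rel]])

lemma edge_rel_insert_doubleton: "edge_rel (insert {x, y} F) = edge_rel F \<union> {(x, y), (y, x)}"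
  unfolding edge_rel_def by (auto simp: doubleton_eq_iff)

lemma edge_rel_insert_non_doubleton: "\<nexists>x y. e = {x, y} \<Longrightarrow> edge_rel (insert e F) = edge_rel F"
  unfolding edge_rel_def by auto

lemma path_edges_simps [simp]:
  "path_edges [] = []"
  "path_edges [a] = []"
  "path_edges (a # b # p) = {a, b} # path_edges (b # p)"
  by (simp_all add: path_edges_def)

lemma path_edges_rtrancl_edge_rel:
  "set (path_edges p) \<subseteq> F \<Longrightarrow> p \<noteq> [] \<Longrightarrow> (hd p, last p) \<in> (edge_rel F)\<^sup>*"
proof (induction p rule: induct_list012)
  case (3 x y p)
  then have "(y, last (y # p)) \<in> (edge_rel F)\<^sup>*" by auto
  moreover have "(x, y) \<in> edge_rel F" using 3 by (auto simp: edge_rel_def)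
  ultimately show ?case by (simp add: converse_rtrancl_into_rtrancl)
qed auto

text \<open>A path whose edges have pairwise distinct colours meets colour j at most once.\<close>
lemma path_ends_connected_avoiding_colour:
  fixes E :: "'a set set" and c :: "'a set \<Rightarrow> 'c" and j :: 'c
  defines "R \<equiv> (edge_rel {e \<in> E. c e \<noteq> j})\<^sup>*"
  assumes "set (path_edges p) \<subseteq> E" "distinct (map c (path_edges p))" "p \<noteq> []"
  shows "(hd p, last p) \<in> R \<or>
    (\<exists>x y. {x, y} \<in> E \<and> c {x, y} = j \<and> (hd p, x) \<in> R \<and> (y, last p) \<in> R)"
  using assms(2-)
proof (induction p rule: induct_list012)
  case (3 a b p)
  show ?case
  proof (cases "c {a, b} = j")
    case True
    then have "set (path_edges (b # p)) \<subseteq> {e \<in> E. c e \<noteq> j}"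
      using "3.prems" by (auto simp: image_iff)
    from path_edges_rtrancl_edge_rel[OF this] have "(b, last (b # p)) \<in> R"
      by (simp add: R_def)
    then show ?thesis
      using True "3.prems"(1) by (intro disjI2 exI[of _ a] exI[of _ b]) (auto simp: R_def)
  next
    case False
    then have "(a, b) \<in> edge_rel {e \<in> E. c e \<noteq> j}"
      using "3.prems"(1) by (auto simp: edge_rel_def)
    then have step: "(a, z) \<in> R" if "(b, z) \<in> R" for z
      using that unfolding R_def by (rule converse_rtrancl_into_rtrancl)
    have "(b, last (b # p)) \<in> R \<or>
        (\<exists>x y. {x, y} \<in> E \<and> c {x, y} = j \<and> (b, x) \<in> R \<and> (y, last (b # p)) \<in> R)"
      using "3.IH"(2) "3.prems" by simp
    moreover have "last (a # b # p) = last (b # p)" by simp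
    ultimately show ?thesis using step by (simp only: list.sel(1)) blast
  qed
qed (simp_all add: R_def)

lemma rtrancl_insert_sym_pair_cases:
  assumes "(a, b) \<in> (R \<union> {(x, y), (y, x)})\<^sup>*"
  shows "(a, b) \<in> R\<^sup>* \<or> ((a, x) \<in> R\<^sup>* \<and> (y, b) \<in> R\<^sup>*) \<or> ((a, y) \<in> R\<^sup>* \<and> (x, b) \<in> R\<^sup>*)"
  using assms
proof (induction rule: rtrancl_induct)
  case (step b c)
  then show ?case by (auto intro: rtrancl_into_rtrancl)
qed simp

lemma pairwise_unconnected_insert_pair_Diff:
  assumes "sym R" and unconn: "pairwise (\<lambda>u v. (u, v) \<notin> R\<^sup>*) S"
    and s: "s \<in> S" "(s, x) \<in> R\<^sup>*"
  shows "pairwise (\<lambda>u v. (u, v) \<notin> (R \<union> {(x, y), (y, x)})\<^sup>*) (S - {s})"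
proof (rule pairwiseI, rule notI)
  fix u v assume uv: "u \<in> S - {s}" "v \<in> S - {s}" "u \<noteq> v"
    and "(u, v) \<in> (R \<union> {(x, y), (y, x)})\<^sup>*"
  then consider "(u, v) \<in> R\<^sup>*" | "(u, x) \<in> R\<^sup>*" | "(x, v) \<in> R\<^sup>*"
    by (blast dest: rtrancl_insert_sym_pair_cases)
  then show False
  proof cases
    case 1
    then show False using pairwiseD[OF unconn] uv by blast
  next
    case 2
    moreover have "(x, s) \<in> R\<^sup>*" using symD[OF sym_rtrancl[OF \<open>sym R\<close>] s(2)] .
    ultimately have "(u, s) \<in> R\<^sup>*" by (rule rtrancl_trans)
    then show False using pairwiseD[OF unconn] uv s(1) by blast
  next
    case 3
    with s(2) have "(s, v) \<in> R\<^sup>*" by (rule rtrancl_trans)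
    then show False using pairwiseD[OF unconn] uv s(1) by blast
  qed
qed

lemma pairwise_unconnected_insert_pair:
  assumes "sym R" and unconn: "pairwise (\<lambda>u v. (u, v) \<notin> R\<^sup>*) S"
    and not_reaching: "\<forall>s\<in>S. (s, x) \<notin> R\<^sup>*"
  shows "pairwise (\<lambda>u v. (u, v) \<notin> (R \<union> {(x, y), (y, x)})\<^sup>*) S"
proof (rule pairwiseI, rule notI)
  fix u v assume uv: "u \<in> S" "v \<in> S" "u \<noteq> v"
    and "(u, v) \<in> (R \<union> {(x, y), (y, x)})\<^sup>*"
  then consider "(u, v) \<in> R\<^sup>*" | "(u, x) \<in> R\<^sup>*" | "(x, v) \<in> R\<^sup>*"
    by (blast dest: rtrancl_insert_sym_pair_cases)
  then show False
  proof cases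
    case 1
    then show False using pairwiseD[OF unconn] uv by blast
  next
    case 2
    then show False using not_reaching uv(1) by blast
  next
    case 3
    then have "(v, x) \<in> R\<^sup>*" by (rule symD[OF sym_rtrancl[OF \<open>sym R\<close>]])
    then show False using not_reaching uv(2) by blast
  qed
qed

lemma exists_unconnected_subset:
  assumes "finite F" "finite V"
  shows "\<exists>S\<subseteq>V. card V \<le> card S + card F \<and> pairwise (\<lambda>u v. (u, v) \<notin> (edge_rel F)\<^sup>*) S"
  using assms(1)
proof (induction F rule: finite_induct)
  case empty
  show ?case by (intro exI[of _ V]) (simp add: pairwise_def edge_rel_def)
next
  case (insert e F)
  then obtain S where S: "S \<subseteq> V" "card V \<le> card S + card F"
      and unconn: "pairwise (\<lambda>u v. (u, v) \<notin> (edge_rel F)\<^sup>*) S"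
    by blast
  have card_insert: "card (insert e F) = card F + 1" using insert by simp
  show ?case
  proof (cases "\<exists>x y. e = {x, y}")
    case False
    then show ?thesis
      using S unconn card_insert by (auto simp: edge_rel_insert_non_doubleton)
  next
    case True
    then obtain x y where e: "e = {x, y}" by blast
    show ?thesis
    proof (cases "\<exists>s\<in>S. (s, x) \<in> (edge_rel F)\<^sup>*")
      case True
      then obtain s where s: "s \<in> S" "(s, x) \<in> (edge_rel F)\<^sup>*" by blast
      have "card S = card (S - {s}) + 1"
        using card_Suc_Diff1[OF finite_subset[OF S(1) assms(2)] s(1)] by simp
      then show ?thesis
        using pairwise_unconnected_insert_pair_Diff[OF sym_edge_rel unconn s, of y] S card_insert
        by (intro exI[of _ "S - {s}"]) (auto simp: e edge_rel_insert_doubleton)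
    next
      case False
      then show ?thesis
        using pairwise_unconnected_insert_pair[OF sym_edge_rel unconn, of x y] S card_insert
        by (intro exI[of _ S]) (auto simp: e edge_rel_insert_doubleton)
    qed
  qed
qed

lemma choose_two_le_colour_class:
  fixes E :: "'a set set" and c :: "'a set \<Rightarrow> 'c" and j :: 'c
  defines "R \<equiv> (edge_rel {e \<in> E. c e \<noteq> j})\<^sup>*"
  assumes rainbow: "\<forall>u\<in>S. \<forall>v\<in>S. u \<noteq> v \<longrightarrow> (\<exists>p. rainbow_path E c p u v)"
    and "finite S" "finite E" and unconn: "pairwise (\<lambda>u v. (u, v) \<notin> R) S"
  shows "card S choose 2 \<le> card {e \<in> E. c e = j}"
proof -
  have R_sym: "(b, a) \<in> R" if "(a, b) \<in> R" for a b
    using edge_rel_rtrancl_sym that unfolding R_def .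
  have R_trans: "(a, b) \<in> R \<Longrightarrow> (b, z) \<in> R \<Longrightarrow> (a, z) \<in> R" for a b z
    unfolding R_def by (rule rtrancl_trans)
  define component_reps where "component_reps e = {u \<in> S. \<exists>z\<in>e. (u, z) \<in> R}" for e
  have "{P. P \<subseteq> S \<and> card P = 2} \<subseteq> component_reps ` {e \<in> E. c e = j}"
  proof
    fix P assume "P \<in> {P. P \<subseteq> S \<and> card P = 2}"
    then obtain s s' where P: "P = {s, s'}" "s \<noteq> s'" "s \<in> S" "s' \<in> S"
      by (auto simp: card_2_iff)
    then obtain p where "rainbow_path E c p s s'" using rainbow by blast
    then have "set (path_edges p) \<subseteq> E" "distinct (map c (path_edges p))" "p \<noteq> []"
        "hd p = s" "last p = s'"
      by (auto simp: rainbow_path_def is_path_def)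
    then have "(s, s') \<in> R \<or> (\<exists>x y. {x, y} \<in> E \<and> c {x, y} = j \<and> (s, x) \<in> R \<and> (y, s') \<in> R)"
      using path_ends_connected_avoiding_colour[of p E c j] unfolding R_def by simp
    moreover have "(s, s') \<notin> R" using pairwiseD[OF unconn] P by blast
    ultimately obtain x y where xy: "{x, y} \<in> E" "c {x, y} = j" "(s, x) \<in> R" "(y, s') \<in> R"
      by blast
    have "component_reps {x, y} = {s, s'}"
    proof (intro equalityI subsetI)
      fix u assume "u \<in> component_reps {x, y}"
      then have "u \<in> S" "(u, s) \<in> R \<or> (u, s') \<in> R"
        using R_trans[OF _ R_sym[OF xy(3)]] R_trans[OF _ xy(4)]
        unfolding component_reps_def by auto
      then show "u \<in> {s, s'}" using pairwiseD[OF unconn] P by blast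
    next
      fix u assume "u \<in> {s, s'}"
      then show "u \<in> component_reps {x, y}"
        using xy(3) R_sym[OF xy(4)] P unfolding component_reps_def by blast
    qed
    then have "P = component_reps {x, y}" using P(1) by simp
    with xy(1,2) show "P \<in> component_reps ` {e \<in> E. c e = j}" by blast
  qed
  then have "card {P. P \<subseteq> S \<and> card P = 2} \<le> card (component_reps ` {e \<in> E. c e = j})"
    by (rule card_mono[rotated]) (simp add: \<open>finite E\<close>)
  also have "\<dots> \<le> card {e \<in> E. c e = j}" by (rule card_image_le) (simp add: \<open>finite E\<close>)
  finally show ?thesis by (simp add: n_subsets[OF \<open>finite S\<close>])
qed

lemma int_mult_diff_one_nonneg: "0 \<le> (m :: int) * (m - 1)"
  by (cases "m \<le> 0") (simp_all add: mult_nonpos_nonpos)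

text \<open>Eliminating a leaves 2K \<ge> (p - 1)(p - 2); the linear bound then follows from
  (p - d - 1)(p - d - 2) \<ge> 0, valid for all integers.\<close>
lemma linear_bound_of_quadratic_bound:
  fixes a p K d :: int
  assumes "p * (p - 1) \<le> 2 * a" "a \<le> K - 1 + p"
  shows "2 * d * p \<le> 2 * K + d\<^sup>2 + 3 * d"
proof -
  have "0 \<le> (p - d - 1) * (p - d - 1 - 1)" by (rule int_mult_diff_one_nonneg)
  with assms show ?thesis by (simp add: algebra_simps power2_eq_square)
qed

lemma colour_class_card_bound:
  fixes V :: "'a set" and E :: "'a set set" and c :: "'a set \<Rightarrow> 'c" and j :: 'c and d :: nat
  defines "K \<equiv> int (card E) - int (card V) + 1"
  assumes "finite V" "finite E"
    and rainbow: "\<forall>u\<in>V. \<forall>v\<in>V. u \<noteq> v \<longrightarrow> (\<exists>p. rainbow_path E c p u v)"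
  shows "2 * int d * int (card {e \<in> E. c e = j}) \<le> 2 * int d * (K - 1) + 2 * K + int d ^ 2 + 3 * int d"
proof -
  let ?F = "{e \<in> E. c e \<noteq> j}" and ?a = "card {e \<in> E. c e = j}"
  obtain S where S: "S \<subseteq> V" "card V \<le> card S + card ?F"
    and unconn: "pairwise (\<lambda>u v. (u, v) \<notin> (edge_rel ?F)\<^sup>*) S"
    using exists_unconnected_subset[of ?F V] \<open>finite V\<close> \<open>finite E\<close> by auto
  have "finite S" using S(1) \<open>finite V\<close> by (rule finite_subset)
  have "card S choose 2 \<le> ?a"
    using choose_two_le_colour_class[OF _ \<open>finite S\<close> \<open>finite E\<close> unconn] rainbow S(1) by blast
  moreover have "2 * (card S choose 2) = card S * (card S - 1)"
    unfolding choose_two by (rule dvd_mult_div_cancel) auto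
  ultimately have "int (card S * (card S - 1)) \<le> int (2 * ?a)" by linarith
  then have quadratic: "int (card S) * (int (card S) - 1) \<le> 2 * int ?a"
    by (cases "card S") (simp_all add: algebra_simps)
  have "card E = ?a + card ?F"
    using \<open>finite E\<close> by (subst card_Un_disjoint[symmetric]) (auto intro: arg_cong[where f = card])
  then have a_le: "int ?a \<le> K - 1 + int (card S)" using S(2) unfolding K_def by linarith
  have "2 * int d * int ?a \<le> 2 * int d * (K - 1 + int (card S))"
    using a_le by (rule mult_left_mono) simp
  also have "\<dots> = 2 * int d * (K - 1) + 2 * int d * int (card S)"
    by (simp add: algebra_simps)
  also have "\<dots> \<le> 2 * int d * (K - 1) + 2 * K + int d ^ 2 + 3 * int d"
    using linear_bound_of_quadratic_bound[OF quadratic a_le, of "int d"] by simp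
  finally show ?thesis .
qed

lemma rainbow_connected_card_edges_bound:
  assumes "0 < d" "simple_graph V E" "rainbow_connected d V E"
  shows "2 * (int (card V) - 1) \<le> 2 * int d * (int (card E) - int (card V) + 1) + int d ^ 2 + int d"
proof -
  obtain c :: "'a set \<Rightarrow> nat" where colours: "\<forall>e\<in>E. c e < d"
    and rainbow: "\<forall>u\<in>V. \<forall>v\<in>V. u \<noteq> v \<longrightarrow> (\<exists>p. rainbow_path E c p u v)"
    using assms(3) unfolding rainbow_connected_def by blast
  have "finite V" "E \<subseteq> Pow V" using assms(2) unfolding simple_graph_def by auto
  then have "finite E" by (meson finite_Pow_iff finite_subset)
  define K where "K = int (card E) - int (card V) + 1"
  have "card E = card (\<Union>j<d. {e \<in> E. c e = j})"
    using colours by (intro arg_cong[where f = card]) auto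
  also have "\<dots> = (\<Sum>j<d. card {e \<in> E. c e = j})"
    using \<open>finite E\<close> by (intro card_UN_disjoint) auto
  finally have "int d * (2 * int (card E)) = (\<Sum>j<d. 2 * int d * int (card {e \<in> E. c e = j}))"
    by (simp add: sum_distrib_left algebra_simps)
  also have "\<dots> \<le> (\<Sum>j<d. 2 * int d * (K - 1) + 2 * K + int d ^ 2 + 3 * int d)"
    using colour_class_card_bound[OF \<open>finite V\<close> \<open>finite E\<close> rainbow] unfolding K_def
    by (intro sum_mono) blast
  also have "\<dots> = int d * (2 * int d * (K - 1) + 2 * K + int d ^ 2 + 3 * int d)"
    by simp
  finally have "2 * int (card E) \<le> 2 * int d * (K - 1) + 2 * K + int d ^ 2 + 3 * int d"
    using \<open>0 < d\<close> by (simp only: mult_le_cancel_left_pos of_nat_0_less_iff)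
  then show ?thesis unfolding K_def by (simp add: algebra_simps)
qed

lemma complete_graph_rainbow_connected:
  fixes V :: "'a set"
  defines "E \<equiv> {{u, v} | u v. u \<in> V \<and> v \<in> V \<and> u \<noteq> v}"
  assumes "0 < d" "finite V"
  shows "simple_graph V E \<and> rainbow_connected d V E"
proof
  show "simple_graph V E" using \<open>finite V\<close> unfolding simple_graph_def E_def by auto
  have "rainbow_path E (\<lambda>_. 0) [u, v] u v" if "u \<in> V" "v \<in> V" "u \<noteq> v" for u v
    using that unfolding rainbow_path_def is_path_def E_def by auto
  then show "rainbow_connected d V E"
    unfolding rainbow_connected_def using \<open>0 < d\<close> by (intro exI[of _ "\<lambda>_. 0"]) blast
qed

theorem proposition2:
  fixes n d :: nat
  assumes "3 \<le> d" and "int d < ceiling (real n / 2)"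
  shows "int (t n d) \<ge> int n - int d - 3 + ceiling ((real n - 1) / real d)"
proof -
  let ?realisable = "\<lambda>m. \<exists>E. simple_graph {0..<n} E \<and> rainbow_connected d {0..<n} E \<and> card E = m"
  have "\<exists>m. ?realisable m"
    using complete_graph_rainbow_connected[of d "{0..<n}"] assms(1) by fastforce
  then have "?realisable (LEAST m. ?realisable m)" by (rule LeastI_ex)
  then obtain E where E: "simple_graph {0..<n} E" "rainbow_connected d {0..<n} E" "card E = t n d"
    unfolding t_def by blast
  define K where "K = int (t n d) - int n + 1"
  have "2 * (int n - 1) \<le> 2 * int d * K + int d ^ 2 + int d"
    using rainbow_connected_card_edges_bound[OF _ E(1,2)] assms(1) E(3) unfolding K_def by simp
  moreover have "int d ^ 2 + int d \<le> 2 * int d * (int d + 2)"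
    by (simp add: power2_eq_square algebra_simps)
  ultimately have "int n - 1 \<le> int d * (K + int d + 2)"
    by (simp add: algebra_simps)
  then have "real_of_int (int n - 1) \<le> real_of_int (int d * (K + int d + 2))"
    by (simp only: of_int_le_iff)
  then have "real n - 1 \<le> real d * (K + int d + 2)" by simp
  then have "(real n - 1) / real d \<le> K + int d + 2"
    using assms(1) by (simp add: divide_le_eq mult.commute)
  then have "ceiling ((real n - 1) / real d) \<le> K + int d + 2"
    by (simp add: ceiling_le_iff)
  then show ?thesis unfolding K_def by linarith
qed

end
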